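(* Let $L$ be a split regular Hom-Lie color algebra with symmetric root system $\Lambda$. For every $\alpha\in\Lambda$, the graded subspace $L_{\Lambda_\alpha}=H_{\Lambda_\alpha}\oplus V_{\Lambda_\alpha}$ is a subalgebra of $L$, i.e. $[L_{\Lambda_\alpha},L_{\Lambda_\alpha}]\subset L_{\Lambda_\alpha}$ and $\phi(L_{\Lambda_\alpha})=L_{\Lambda_\alpha}$.
   Context: Let $\mathbb{K}$ be a field and $\Gamma$ an abelian group. A bi-character is $\varepsilon:\Gamma\times\Gamma\to\mathbb{K}\setminus\{0\}$ with $\varepsilon(a,b)\varepsilon(b,a)=1$, $\varepsilon(a,b+c)=\varepsilon(a,b)\varepsilon(a,c)$, $\varepsilon(a+b,c)=\varepsilon(a,c)\varepsilon(b,c)$. A Hom-Lie color algebra $(L,[\cdot,\cdot],\phi,\varepsilon)$ is a $\Gamma$-graded space $L=\bigoplus_gL_g$ with bilinear $[\cdot,\cdot]$, $[L_g,L_h]\subset L_{g+h}$, linear $\phi$ with $\phi(L_g)\subset L_g$, $\phi([x,y])=[\phi x,\phi y]$, such that for homogeneous $x,y,z$ of degrees $\bar x,\bar y,\bar z$: $[x,y]=-\varepsilon(\bar x,\bar y)[y,x]$ and $\varepsilon(\bar z,\bar x)[\phi(x),[y,z]]+\varepsilon(\bar x,\bar y)[\phi(y),[z,x]]+\varepsilon(\bar y,\bar z)[\phi(z),[x,y]]=0$; regular means $\phi$ bijective. A subalgebra is a graded subspace $A$ with $[A,A]\subset A$, $\phi(A)=A$; abelian if $[A,A]=0$. $H=\bigoplus_gH_g$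 is a maximal abelian graded subalgebra (so $\phi(H_0)=H_0$). For linear $\alpha:H_0\to\mathbb{K}$, $L_\alpha=\{v:[h,v]=\alpha(h)\phi(v)\ \forall h\in H_0\}$; $\Lambda=\{\alpha\in H_0^*\setminus\{0\}:L_\alpha\neq0\}$; $L$ is split if $L=H\oplus(\bigoplus_{\alpha\in\Lambda}L_\alpha)$. $\Lambda$ is symmetric if $\alpha\in\Lambda\Rightarrow-\alpha\in\Lambda$. For $z\in\mathbb{Z}$, $\alpha\phi^{z}:=\alpha\circ(\phi|_{H_0})^{z}$; $\mathbb{N}=\{0,1,2,\dots\}$. Connection: for $\alpha,\beta\in\Lambda$, $\alpha$ is connected to $\beta$ if there exist $k\ge1$ and $\alpha_1,\dots,\alpha_k\in\Lambda$ such that: if $k=1$, $\alpha_1\in\{\alpha\phi^{-n}:n\in\mathbb{N}\}\cap\{\pm\beta\phi^{-m}:m\in\mathbb{N}\}$; if $k\ge2$, then $\alpha_1\in\{\alpha\phi^{-n}:n\in\mathbb{N}\}$, for each $i=1,\dots,k-2$ one has $\alpha_1\phi^{-i}+\alpha_2\phi^{-i}+\alpha_3\phi^{-i+1}+\cdots+\alpha_{i+1}\phi^{-1}\in\Lambda$, and $\alpha_1\phi^{-k+1}+\alpha_2\phi^{-k+1}+\alpha_3\phi^{-k+2}+\cdots+\alpha_k\phi^{-1}\in\{\pm\beta\phi^{-m}:m\in\mathbb{N}\}$. Connectedness $\sim$ is an equivalence relation on $\Lambda$; $\Lambda_\alpha:=\{\beta\in\Lambda:\beta\sim\alpha\}$.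 Define $H_{\Lambda_\alpha}:=\mathrm{span}_{\mathbb{K}}\{[L_\beta,L_{-\beta}]:\beta\in\Lambda_\alpha\}\subset H$, $V_{\Lambda_\alpha}:=\bigoplus_{\beta\in\Lambda_\alpha}L_\beta$, and $L_{\Lambda_\alpha}:=H_{\Lambda_\alpha}\oplus V_{\Lambda_\alpha}$. *)

theory Defs
  imports Complex_Main
begin

text \<open>The field K is a type 'k of class field, the abelian group Gamma is a
type 'g of class ab_group_add. The algebra L is the whole of a type 'v (of class ab_group_add)
equipped with a scalar multiplication sm :: 'k => 'v => 'v making it a K-vector space.
The grading is a family Lg :: 'g => 'v set of subspaces with L = direct sum of the Lg g.
Linear forms alpha on H_0 are represented as functions 'v => 'k that are additive and
homogeneous on H_0 and vanish outside H_0 (so equality of forms is equality of functions).\<close>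

definition bichar :: "('g::ab_group_add \<Rightarrow> 'g \<Rightarrow> 'k::field) \<Rightarrow> bool" where
  "bichar \<epsilon> \<longleftrightarrow> (\<forall>a b. \<epsilon> a b \<noteq> 0) \<and> (\<forall>a b. \<epsilon> a b * \<epsilon> b a = 1)
     \<and> (\<forall>a b c. \<epsilon> a (b + c) = \<epsilon> a b * \<epsilon> a c)
     \<and> (\<forall>a b c. \<epsilon> (a + b) c = \<epsilon> a c * \<epsilon> b c)"

definition graded_space :: "('k::field \<Rightarrow> 'v::ab_group_add \<Rightarrow> 'v) \<Rightarrow> ('g::ab_group_add \<Rightarrow> 'v set) \<Rightarrow> bool" where
  "graded_space sm Lg \<longleftrightarrow> vector_space sm \<and> (\<forall>g. module.subspace sm (Lg g))
     \<and> (\<forall>v. \<exists>S c. finite S \<and> (\<forall>g\<in>S. c g \<in> Lg g) \<and> v = sum c S)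
     \<and> (\<forall>S c. finite S \<longrightarrow> (\<forall>g\<in>S. c g \<in> Lg g) \<longrightarrow> sum c S = 0 \<longrightarrow> (\<forall>g\<in>S. c g = 0))"

definition hom_lie_color ::
  "('k::field \<Rightarrow> 'v::ab_group_add \<Rightarrow> 'v) \<Rightarrow> ('g::ab_group_add \<Rightarrow> 'v set)
    \<Rightarrow> ('v \<Rightarrow> 'v \<Rightarrow> 'v) \<Rightarrow> ('v \<Rightarrow> 'v) \<Rightarrow> ('g \<Rightarrow> 'g \<Rightarrow> 'k) \<Rightarrow> bool" where
  "hom_lie_color sm Lg br \<phi> \<epsilon> \<longleftrightarrow>
     graded_space sm Lg \<and> bichar \<epsilon>
     \<and> (\<forall>x. Vector_Spaces.linear sm sm (br x)) \<and> (\<forall>y. Vector_Spaces.linear sm sm (\<lambda>x. br x y))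
     \<and> (\<forall>g h x y. x \<in> Lg g \<longrightarrow> y \<in> Lg h \<longrightarrow> br x y \<in> Lg (g + h))
     \<and> Vector_Spaces.linear sm sm \<phi> \<and> (\<forall>g. \<phi> ` Lg g \<subseteq> Lg g)
     \<and> (\<forall>x y. \<phi> (br x y) = br (\<phi> x) (\<phi> y))
     \<and> (\<forall>a b x y. x \<in> Lg a \<longrightarrow> y \<in> Lg b \<longrightarrow> br x y = - sm (\<epsilon> a b) (br y x))
     \<and> (\<forall>a b c x y z. x \<in> Lg a \<longrightarrow> y \<in> Lg b \<longrightarrow> z \<in> Lg c \<longrightarrow>
          sm (\<epsilon> c a) (br (\<phi> x) (br y z)) + sm (\<epsilon> a b) (br (\<phi> y) (br z x))
          + sm (\<epsilon> b c) (br (\<phi> z) (br x y)) = 0)"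

definition graded_subspace :: "('k::field \<Rightarrow> 'v::ab_group_add \<Rightarrow> 'v) \<Rightarrow> ('g::ab_group_add \<Rightarrow> 'v set) \<Rightarrow> 'v set \<Rightarrow> bool" where
  "graded_subspace sm Lg A \<longleftrightarrow> module.subspace sm A
     \<and> (\<forall>v\<in>A. \<exists>S c. finite S \<and> (\<forall>g\<in>S. c g \<in> A \<inter> Lg g) \<and> v = sum c S)"

definition subalgebra where
  "subalgebra sm Lg br \<phi> A \<longleftrightarrow> graded_subspace sm Lg A
     \<and> (\<forall>x\<in>A. \<forall>y\<in>A. br x y \<in> A) \<and> \<phi> ` A = A"

definition abelian :: "('v \<Rightarrow> 'v \<Rightarrow> 'v::ab_group_add) \<Rightarrow> 'v set \<Rightarrow> bool" where
  "abelian br A \<longleftrightarrow> (\<forall>x\<in>A. \<forall>y\<in>A. br x y = 0)"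

definition max_abelian_graded_subalgebra where
  "max_abelian_graded_subalgebra sm Lg br \<phi> H \<longleftrightarrow>
     subalgebra sm Lg br \<phi> H \<and> abelian br H
     \<and> (\<forall>A. subalgebra sm Lg br \<phi> A \<and> abelian br A \<and> H \<subseteq> A \<longrightarrow> A = H)"

definition Hzero :: "('g::ab_group_add \<Rightarrow> 'v set) \<Rightarrow> 'v set \<Rightarrow> 'v set" where
  "Hzero Lg H = H \<inter> Lg 0"

definition dual_form :: "('k::field \<Rightarrow> 'v::ab_group_add \<Rightarrow> 'v) \<Rightarrow> 'v set \<Rightarrow> ('v \<Rightarrow> 'k) \<Rightarrow> bool" where
  "dual_form sm H0 \<alpha> \<longleftrightarrow> (\<forall>x\<in>H0. \<forall>y\<in>H0. \<alpha> (x + y) = \<alpha> x + \<alpha> y)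
     \<and> (\<forall>c. \<forall>x\<in>H0. \<alpha> (sm c x) = c * \<alpha> x) \<and> (\<forall>x. x \<notin> H0 \<longrightarrow> \<alpha> x = 0)"

definition root_space where
  "root_space sm Lg br \<phi> H \<alpha> = {v. \<forall>h\<in>Hzero Lg H. br h v = sm (\<alpha> h) (\<phi> v)}"

definition roots where
  "roots sm Lg br \<phi> H = {\<alpha>. dual_form sm (Hzero Lg H) \<alpha> \<and> \<alpha> \<noteq> (\<lambda>_. 0)
       \<and> root_space sm Lg br \<phi> H \<alpha> \<noteq> {0}}"

definition neg_form :: "('v \<Rightarrow> 'k::field) \<Rightarrow> 'v \<Rightarrow> 'k" where
  "neg_form \<alpha> = (\<lambda>h. - \<alpha> h)"

text \<open>alpha phi^z = alpha o (phi|_{H_0})^z, z an integer (phi bijective with phi(H_0) = H_0,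
  so (phi|_{H_0})^{-1} is the restriction of inv phi).\<close>
definition phi_pow :: "('v \<Rightarrow> 'v) \<Rightarrow> int \<Rightarrow> 'v \<Rightarrow> 'v" where
  "phi_pow \<phi> z = (if 0 \<le> z then \<phi> ^^ nat z else inv \<phi> ^^ nat (- z))"

definition rt_comp :: "('v \<Rightarrow> 'v) \<Rightarrow> 'v set \<Rightarrow> ('v \<Rightarrow> 'k::field) \<Rightarrow> int \<Rightarrow> 'v \<Rightarrow> 'k" where
  "rt_comp \<phi> H0 \<alpha> z = (\<lambda>h. if h \<in> H0 then \<alpha> (phi_pow \<phi> z h) else 0)"

text \<open>The form  a_1 phi^{-i} + a_2 phi^{-i} + a_3 phi^{-i+1} + ... + a_{i+1} phi^{-1}
  (for i = 0 this is just a_1).\<close>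
definition conn_sum :: "('v \<Rightarrow> 'v) \<Rightarrow> 'v set \<Rightarrow> (nat \<Rightarrow> 'v \<Rightarrow> 'k::field) \<Rightarrow> nat \<Rightarrow> 'v \<Rightarrow> 'k" where
  "conn_sum \<phi> H0 a i = (\<lambda>h. rt_comp \<phi> H0 (a 1) (- int i) h
      + (\<Sum>j\<in>{2..i+1}. rt_comp \<phi> H0 (a j) (- (int i + 2 - int j)) h))"

definition connected where
  "connected sm Lg br \<phi> H \<alpha> \<beta> \<longleftrightarrow>
    (let \<Lambda> = roots sm Lg br \<phi> H; H0 = Hzero Lg H in
     \<exists>k::nat. \<exists>a. 1 \<le> k \<and> (\<forall>j\<in>{1..k}. a j \<in> \<Lambda>)
       \<and> (\<exists>n::nat. a 1 = rt_comp \<phi> H0 \<alpha> (- int n))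
       \<and> (\<forall>i\<in>{1..k-2}. conn_sum \<phi> H0 a i \<in> \<Lambda>)
       \<and> (\<exists>m::nat. (if k = 1 then a 1 else conn_sum \<phi> H0 a (k - 1))
                     \<in> {rt_comp \<phi> H0 \<beta> (- int m), neg_form (rt_comp \<phi> H0 \<beta> (- int m))}))"

definition conn_class where
  "conn_class sm Lg br \<phi> H \<alpha> = {\<beta> \<in> roots sm Lg br \<phi> H. connected sm Lg br \<phi> H \<beta> \<alpha>}"

definition H_class where
  "H_class sm Lg br \<phi> H \<alpha> = module.span sm
     (\<Union>\<beta>\<in>conn_class sm Lg br \<phi> H \<alpha>.
        {br x y | x y. x \<in> root_space sm Lg br \<phi> H \<beta> \<and> y \<in> root_space sm Lg br \<phi> H (neg_form \<beta>)})"

definition V_class where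
  "V_class sm Lg br \<phi> H \<alpha> = module.span sm (\<Union>\<beta>\<in>conn_class sm Lg br \<phi> H \<alpha>. root_space sm Lg br \<phi> H \<beta>)"

definition L_class where
  "L_class sm Lg br \<phi> H \<alpha> = {h + v | h v. h \<in> H_class sm Lg br \<phi> H \<alpha> \<and> v \<in> V_class sm Lg br \<phi> H \<alpha>}"

definition is_split where
  "is_split sm Lg br \<phi> H \<longleftrightarrow>
    (let \<Lambda> = roots sm Lg br \<phi> H in
     (\<forall>v. \<exists>h\<in>H. \<exists>S f. finite S \<and> S \<subseteq> \<Lambda> \<and> (\<forall>\<alpha>\<in>S. f \<alpha> \<in> root_space sm Lg br \<phi> H \<alpha>)
              \<and> v = h + sum f S)
     \<and> (\<forall>h\<in>H. \<forall>S f. finite S \<longrightarrow> S \<subseteq> \<Lambda> \<longrightarrow> (\<forall>\<alpha>\<in>S. f \<alpha> \<in> root_space sm Lg br \<phi> H \<alpha>)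
              \<longrightarrow> h + sum f S = 0 \<longrightarrow> h = 0 \<and> (\<forall>\<alpha>\<in>S. f \<alpha> = 0)))"

definition symmetric_roots where
  "symmetric_roots sm Lg br \<phi> H \<longleftrightarrow>
     (\<forall>\<alpha>\<in>roots sm Lg br \<phi> H. neg_form \<alpha> \<in> roots sm Lg br \<phi> H)"

end

theory Submission
  imports Defs
begin

text \<open>Root spaces move predictably: by the Hom-Jacobi identity with \<open>\<phi>\<^sup>-\<^sup>1 h\<close>, \<open>h \<in> H\<^sub>0\<close>, one gets
  \<open>[L\<^sub>\<beta>, L\<^sub>\<gamma>] \<subseteq> L\<^bsub>\<beta>\<phi>\<^sup>-\<^sup>1 + \<gamma>\<phi>\<^sup>-\<^sup>1\<^esub>\<close>, and \<open>\<phi>\<^sup>\<plusminus>\<^sup>1\<close> maps \<open>L\<^sub>\<beta>\<close> into \<open>L\<^bsub>\<beta>\<phi>\<^sup>\<mp>\<^sup>1\<^esub>\<close>; by the splitting, \<open>L\<^sub>0 = H\<close>.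
  Writing the connection sums recursively, connection chains can be shifted, concatenated and
  reversed, so \<open>\<beta> \<sim> \<beta>\<phi>\<^sup>\<plusminus>\<^sup>1\<close> and, for \<open>\<beta> \<sim> \<gamma> \<sim> \<alpha>\<close>, also \<open>\<beta>\<phi>\<^sup>-\<^sup>1 + \<gamma>\<phi>\<^sup>-\<^sup>1 \<sim> \<alpha>\<close> whenever it is a root.
  Hence for \<open>\<beta>, \<gamma> \<in> \<Lambda>\<^sub>\<alpha>\<close> the bracket \<open>[L\<^sub>\<beta>, L\<^sub>\<gamma>]\<close> lies in \<open>H\<^bsub>\<Lambda>\<^sub>\<alpha>\<^esub>\<close> if \<open>\<gamma> = -\<beta>\<close>, in \<open>V\<^bsub>\<Lambda>\<^sub>\<alpha>\<^esub>\<close> if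
  \<open>\<beta>\<phi>\<^sup>-\<^sup>1 + \<gamma>\<phi>\<^sup>-\<^sup>1\<close> is a root, and vanishes otherwise; \<open>H\<^bsub>\<Lambda>\<^sub>\<alpha>\<^esub> \<subseteq> H\<close> is abelian and normalises
  \<open>V\<^bsub>\<Lambda>\<^sub>\<alpha>\<^esub>\<close>, and \<open>\<phi>\<^sup>\<plusminus>\<^sup>1\<close> map root spaces of the class to root spaces of the class.\<close>

locale regular_hom_lie_color =
  fixes sm :: "'k::field \<Rightarrow> 'v::ab_group_add \<Rightarrow> 'v"
    and Lg :: "'g::ab_group_add \<Rightarrow> 'v set"
    and br :: "'v \<Rightarrow> 'v \<Rightarrow> 'v"
    and \<phi> :: "'v \<Rightarrow> 'v"
    and \<epsilon> :: "'g \<Rightarrow> 'g \<Rightarrow> 'k"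
  assumes hom_lie_color: "hom_lie_color sm Lg br \<phi> \<epsilon>"
    and bij_phi: "bij \<phi>"
begin

lemma
  shows graded_space: "graded_space sm Lg"
    and bichar: "bichar \<epsilon>"
    and linear_bracket_left: "Vector_Spaces.linear sm sm (\<lambda>x. br x y)"
    and linear_bracket_right: "Vector_Spaces.linear sm sm (br x)"
    and bracket_graded: "x \<in> Lg a \<Longrightarrow> y \<in> Lg b \<Longrightarrow> br x y \<in> Lg (a + b)"
    and linear_phi: "Vector_Spaces.linear sm sm \<phi>"
    and phi_graded: "x \<in> Lg a \<Longrightarrow> \<phi> x \<in> Lg a"
    and phi_bracket: "\<phi> (br x y) = br (\<phi> x) (\<phi> y)"
    and bracket_skew: "x \<in> Lg a \<Longrightarrow> y \<in> Lg b \<Longrightarrow> br x y = - sm (\<epsilon> a b) (br y x)"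
    and hom_jacobi: "x \<in> Lg a \<Longrightarrow> y \<in> Lg b \<Longrightarrow> z \<in> Lg c \<Longrightarrow>
      sm (\<epsilon> c a) (br (\<phi> x) (br y z)) + sm (\<epsilon> a b) (br (\<phi> y) (br z x))
      + sm (\<epsilon> b c) (br (\<phi> z) (br x y)) = 0"
  using hom_lie_color unfolding hom_lie_color_def image_subset_iff by meson+

sublocale vector_space sm
  using graded_space unfolding graded_space_def by blast

sublocale vector_space_pair sm sm ..

lemma Lg_subspace: "subspace (Lg g)"
  using graded_space unfolding graded_space_def by blast

lemma graded_decomposition: "\<exists>S c. finite S \<and> (\<forall>g\<in>S. c g \<in> Lg g) \<and> v = sum c S"
  using graded_space unfolding graded_space_def by blast

lemma graded_decomposition_unique:
  "finite S \<Longrightarrow> \<forall>g\<in>S. c g \<in> Lg g \<Longrightarrow> sum c S = 0 \<Longrightarrow> g \<in> S \<Longrightarrow> c g = 0"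
  using graded_space unfolding graded_space_def by blast

lemmas bracket_add_left = linear_add[OF linear_bracket_left]
  and bracket_add_right = linear_add[OF linear_bracket_right]
  and bracket_scale_right = linear_scale[OF linear_bracket_right]
  and bracket_zero_right = linear_0[OF linear_bracket_right]
  and bracket_neg_right = linear_neg[OF linear_bracket_right]
  and bracket_sum_left = linear_sum[OF linear_bracket_left]
  and bracket_sum_right = linear_sum[OF linear_bracket_right]

lemmas phi_add = linear_add[OF linear_phi]
  and phi_scale = linear_scale[OF linear_phi]
  and phi_sum = linear_sum[OF linear_phi]

lemma linear_inv_phi: "Vector_Spaces.linear sm sm (inv \<phi>)"
  using bij_module_hom_imp_inv_module_hom[OF _ bij_phi] linear_phi module_hom_iff_linear by blast

lemmas inv_phi_add = linear_add[OF linear_inv_phi]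
  and inv_phi_scale = linear_scale[OF linear_inv_phi]

lemma phi_inv_phi [simp]: "\<phi> (inv \<phi> x) = x"
  using bij_phi by (simp add: bij_is_surj surj_f_inv_f)

lemma inv_phi_phi [simp]: "inv \<phi> (\<phi> x) = x"
  using bij_phi by (simp add: bij_is_inj inv_f_f)

lemma phi_eq_0_iff [simp]: "\<phi> x = 0 \<longleftrightarrow> x = 0"
  by (metis inv_phi_phi linear_0[OF linear_phi])

lemma inv_phi_bracket: "inv \<phi> (br x y) = br (inv \<phi> x) (inv \<phi> y)"
  by (metis phi_bracket inv_phi_phi phi_inv_phi)

lemma epsilon_inverse: "\<epsilon> a b * \<epsilon> b a = 1"
  using bichar unfolding bichar_def by blast

lemma epsilon_zero_right [simp]: "\<epsilon> a 0 = 1"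
proof -
  have "\<epsilon> a (0 + 0) = \<epsilon> a 0 * \<epsilon> a 0" and "\<epsilon> a 0 \<noteq> 0"
    using bichar unfolding bichar_def by blast+
  then show ?thesis by simp
qed

lemma epsilon_zero_left [simp]: "\<epsilon> 0 a = 1"
  using epsilon_inverse[of 0 a] by simp

lemma homogeneous_decomposition_trivial:
  assumes x: "x \<in> Lg a" and S: "finite S" "\<forall>g\<in>S. c g \<in> Lg g" "x = sum c S"
    and g: "g \<in> S" "g \<noteq> a"
  shows "c g = 0"
proof -
  define d where "d g = (if g \<in> S then c g else 0) - (if g = a then x else 0)" for g
  have "\<forall>g\<in>insert a S. d g \<in> Lg g"
    using S(2) x unfolding d_def
    by (auto intro!: subspace_diff[OF Lg_subspace] subspace_neg[OF Lg_subspace] subspace_0[OF Lg_subspace])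
  moreover have "(\<Sum>g\<in>insert a S. if g \<in> S then c g else 0) = sum c S"
    using S(1) by (simp add: sum.inter_restrict[symmetric] Int_absorb1 subset_insertI)
  then have "sum d (insert a S) = 0"
    using S by (simp add: d_def sum_subtractf)
  ultimately have "d g = 0"
    using graded_decomposition_unique S(1) g(1) by blast
  then show ?thesis
    using g unfolding d_def by simp
qed

lemma inv_phi_graded:
  assumes x: "x \<in> Lg a"
  shows "inv \<phi> x \<in> Lg a"
proof -
  obtain S c where S: "finite S" "\<forall>g\<in>S. c g \<in> Lg g" "inv \<phi> x = sum c S"
    using graded_decomposition by blast
  have sum: "x = (\<Sum>g\<in>S. \<phi> (c g))"
    using phi_inv_phi[of x] unfolding S(3) phi_sum by simp
  have "\<forall>g\<in>S. \<phi> (c g) \<in> Lg g"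
    using S(2) phi_graded by blast
  then have "c g = 0" if "g \<in> S" "g \<noteq> a" for g
    using homogeneous_decomposition_trivial[OF x S(1) _ sum that] by simp
  then have "inv \<phi> x = sum c (S \<inter> {a})"
    using S(1,3) by (auto intro: sum.mono_neutral_right)
  also have "\<dots> \<in> Lg a"
    using S(2) by (intro subspace_sum[OF Lg_subspace]) auto
  finally show ?thesis .
qed

end

locale hom_lie_color_abelian_subalgebra = regular_hom_lie_color sm Lg br \<phi> \<epsilon>
  for sm :: "'k::field \<Rightarrow> 'v::ab_group_add \<Rightarrow> 'v" and Lg :: "'g::ab_group_add \<Rightarrow> 'v set"
    and br \<phi> \<epsilon> +
  fixes H :: "'v set"
  assumes subalgebra_H: "subalgebra sm Lg br \<phi> H"
    and abelian_H: "abelian br H"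
begin

abbreviation "H0 \<equiv> Hzero Lg H"
abbreviation "\<Lambda> \<equiv> roots sm Lg br \<phi> H"
abbreviation "Lr \<equiv> root_space sm Lg br \<phi> H"

lemma H_subspace: "subspace H"
  using subalgebra_H unfolding subalgebra_def graded_subspace_def by blast

lemma phi_image_H: "\<phi> ` H = H"
  using subalgebra_H unfolding subalgebra_def by blast

lemma bracket_H: "x \<in> H \<Longrightarrow> y \<in> H \<Longrightarrow> br x y = 0"
  using abelian_H unfolding abelian_def by blast

lemma H0_subspace: "subspace H0"
  unfolding Hzero_def by (rule subspace_inter[OF H_subspace Lg_subspace])

lemma H0_H: "h \<in> H0 \<Longrightarrow> h \<in> H"
  and H0_Lg0: "h \<in> H0 \<Longrightarrow> h \<in> Lg 0"
  unfolding Hzero_def by blast+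

lemma phi_H0: "h \<in> H0 \<Longrightarrow> \<phi> h \<in> H0"
  using phi_image_H phi_graded unfolding Hzero_def by blast

lemma inv_phi_H: "h \<in> H \<Longrightarrow> inv \<phi> h \<in> H"
  using phi_image_H by (metis imageE inv_phi_phi)

lemma inv_phi_H0: "h \<in> H0 \<Longrightarrow> inv \<phi> h \<in> H0"
  using inv_phi_H inv_phi_graded unfolding Hzero_def by blast

lemma funpow_inv_phi_H0: "h \<in> H0 \<Longrightarrow> (inv \<phi> ^^ n) h \<in> H0"
  by (induction n) (auto simp: inv_phi_H0)

definition shift :: "('v \<Rightarrow> 'k) \<Rightarrow> nat \<Rightarrow> 'v \<Rightarrow> 'k" where
  "shift \<gamma> n = rt_comp \<phi> H0 \<gamma> (- int n)"

lemma shift_apply: "shift \<gamma> n h = (if h \<in> H0 then \<gamma> ((inv \<phi> ^^ n) h) else 0)"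
  unfolding shift_def rt_comp_def phi_pow_def by auto

lemma rt_comp_1_apply: "rt_comp \<phi> H0 \<gamma> 1 h = (if h \<in> H0 then \<gamma> (\<phi> h) else 0)"
  unfolding rt_comp_def phi_pow_def by simp

lemma shift_shift [simp]: "shift (shift \<gamma> n) m = shift \<gamma> (n + m)"
  by (rule ext) (simp add: shift_apply funpow_inv_phi_H0 funpow_add)

lemma shift_Suc_apply: "h \<in> H0 \<Longrightarrow> shift \<gamma> n (inv \<phi> h) = shift \<gamma> (Suc n) h"
  by (simp add: shift_apply inv_phi_H0 funpow_swap1)

lemma shift_1_apply: "h \<in> H0 \<Longrightarrow> shift \<gamma> 1 h = \<gamma> (inv \<phi> h)"
  by (simp add: shift_apply)

lemma shift_0: "dual_form sm H0 \<gamma> \<Longrightarrow> shift \<gamma> 0 = \<gamma>"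
  unfolding dual_form_def by (rule ext) (auto simp: shift_apply)

lemma shift_add: "shift (\<lambda>h. \<gamma> h + \<delta> h) n = (\<lambda>h. shift \<gamma> n h + shift \<delta> n h)"
  by (rule ext) (simp add: shift_apply)

lemma shift_scale: "shift (\<lambda>h. e * \<gamma> h) n = (\<lambda>h. e * shift \<gamma> n h)"
  by (rule ext) (simp add: shift_apply)

lemma shift_neg_form: "shift (neg_form \<gamma>) n = neg_form (shift \<gamma> n)"
  by (rule ext) (simp add: shift_apply neg_form_def)

lemma shift_zero: "shift (\<lambda>_. 0) n = (\<lambda>_. 0)"
  by (rule ext) (simp add: shift_apply)

lemma shift_rt_comp_1: "dual_form sm H0 \<gamma> \<Longrightarrow> shift (rt_comp \<phi> H0 \<gamma> 1) 1 = \<gamma>"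
  unfolding dual_form_def by (rule ext) (auto simp: shift_apply rt_comp_1_apply inv_phi_H0)

lemma rt_comp_1_neg_form: "rt_comp \<phi> H0 (neg_form \<gamma>) 1 = neg_form (rt_comp \<phi> H0 \<gamma> 1)"
  by (rule ext) (simp add: rt_comp_1_apply neg_form_def)

lemma dual_form_add:
  "dual_form sm H0 \<gamma> \<Longrightarrow> dual_form sm H0 \<delta> \<Longrightarrow> dual_form sm H0 (\<lambda>h. \<gamma> h + \<delta> h)"
  unfolding dual_form_def by (simp add: algebra_simps)

lemma dual_form_shift: "dual_form sm H0 \<gamma> \<Longrightarrow> dual_form sm H0 (shift \<gamma> n)"
proof -
  have "(inv \<phi> ^^ n) (x + y) = (inv \<phi> ^^ n) x + (inv \<phi> ^^ n) y"
    and "(inv \<phi> ^^ n) (sm c x) = sm c ((inv \<phi> ^^ n) x)" for x y c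
    by (induction n) (simp_all add: inv_phi_add inv_phi_scale)
  then show "dual_form sm H0 \<gamma> \<Longrightarrow> dual_form sm H0 (shift \<gamma> n)"
    unfolding dual_form_def
    by (simp add: shift_apply funpow_inv_phi_H0 subspace_add[OF H0_subspace] subspace_scale[OF H0_subspace])
qed

lemma dual_form_rt_comp_1: "dual_form sm H0 \<gamma> \<Longrightarrow> dual_form sm H0 (rt_comp \<phi> H0 \<gamma> 1)"
  unfolding dual_form_def
  by (simp add: rt_comp_1_apply phi_add phi_scale phi_H0 subspace_add[OF H0_subspace] subspace_scale[OF H0_subspace])

lemma root_space_iff: "x \<in> Lr \<gamma> \<longleftrightarrow> (\<forall>h\<in>H0. br h x = sm (\<gamma> h) (\<phi> x))"
  unfolding root_space_def by simp

lemma root_space_subspace: "subspace (Lr \<gamma>)"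
  unfolding subspace_def
proof (intro conjI ballI allI)
  show "0 \<in> Lr \<gamma>"
    unfolding root_space_iff by (simp add: bracket_zero_right)
  show "x + y \<in> Lr \<gamma>" if "x \<in> Lr \<gamma>" "y \<in> Lr \<gamma>" for x y
    using that unfolding root_space_iff by (simp add: bracket_add_right phi_add scale_right_distrib)
  show "sm c x \<in> Lr \<gamma>" if "x \<in> Lr \<gamma>" for c x
    using that unfolding root_space_iff by (simp add: bracket_scale_right phi_scale mult.commute)
qed

lemma root_space_homogeneous_components:
  assumes x: "x \<in> Lr \<beta>"
  obtains S c where "finite S" "\<forall>g\<in>S. c g \<in> Lr \<beta> \<and> c g \<in> Lg g" "x = sum c S"
proof -
  obtain S c where S: "finite S" "\<forall>g\<in>S. c g \<in> Lg g" "x = sum c S"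
    using graded_decomposition by blast
  have "br h (c g) = sm (\<beta> h) (\<phi> (c g))" if g: "g \<in> S" and h: "h \<in> H0" for g h
  proof -
    define d where "d g = br h (c g) - sm (\<beta> h) (\<phi> (c g))" for g
    have "\<forall>g\<in>S. d g \<in> Lg g"
      using S(2) bracket_graded[OF H0_Lg0[OF h]] phi_graded unfolding d_def
      by (force intro: subspace_diff[OF Lg_subspace] subspace_scale[OF Lg_subspace])
    moreover have "sum d S = 0"
      using x h unfolding d_def sum_subtractf S(3) bracket_sum_right phi_sum scale_sum_right root_space_iff
      by simp
    ultimately show ?thesis
      using graded_decomposition_unique[OF S(1)] g unfolding d_def by fastforce
  qed
  then show thesis
    using that S unfolding root_space_iff by blast
qed

lemma bracket_homogeneous_root_vectors:
  assumes x: "x \<in> Lr \<beta>" "x \<in> Lg a" and y: "y \<in> Lr \<gamma>" "y \<in> Lg b"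
  shows "br x y \<in> Lr (\<lambda>h. shift \<beta> 1 h + shift \<gamma> 1 h)"
  unfolding root_space_iff
proof
  fix h assume h: "h \<in> H0"
  define h' where "h' = inv \<phi> h"
  have h': "h' \<in> H0" "h' \<in> Lg 0" "\<phi> h' = h"
    using inv_phi_H0[OF h] H0_Lg0 unfolding h'_def by auto
  define B where "B = br (\<phi> x) (\<phi> y)"
  have "sm (\<epsilon> a b) (br (\<phi> y) (br h' x)) = - sm (\<beta> h') B"
    using x h'(1) bracket_skew[OF phi_graded[OF y(2)] phi_graded[OF x(2)]] epsilon_inverse[of a b]
    unfolding root_space_iff B_def by (simp add: bracket_scale_right mult.commute mult.left_commute)
  moreover have "sm (\<epsilon> 0 a) (br (\<phi> x) (br y h')) = - sm (\<gamma> h') B"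
    using y h' bracket_skew[OF y(2) h'(2)] unfolding root_space_iff B_def
    by (simp add: bracket_neg_right bracket_scale_right)
  ultimately have "br h (br x y) = sm (\<gamma> h') B + sm (\<beta> h') B"
    using hom_jacobi[OF h'(2) x(2) y(2)] h'(3) by (simp add: algebra_simps)
  then show "br h (br x y) = sm (shift \<beta> 1 h + shift \<gamma> 1 h) (\<phi> (br x y))"
    unfolding shift_1_apply[OF h] B_def phi_bracket h'_def[symmetric] by (simp add: scale_left_distrib)
qed

lemma bracket_root_spaces:
  assumes x: "x \<in> Lr \<beta>" and y: "y \<in> Lr \<gamma>"
  shows "br x y \<in> Lr (\<lambda>h. shift \<beta> 1 h + shift \<gamma> 1 h)"
proof -
  obtain S c where S: "finite S" "\<forall>g\<in>S. c g \<in> Lr \<beta> \<and> c g \<in> Lg g" "x = sum c S"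
    using root_space_homogeneous_components[OF x] by blast
  obtain T d where T: "finite T" "\<forall>g\<in>T. d g \<in> Lr \<gamma> \<and> d g \<in> Lg g" "y = sum d T"
    using root_space_homogeneous_components[OF y] by blast
  have "br x y = (\<Sum>g\<in>S. \<Sum>t\<in>T. br (c g) (d t))"
    unfolding S(3) T(3) bracket_sum_left bracket_sum_right by (rule sum.swap)
  also have "\<dots> \<in> Lr (\<lambda>h. shift \<beta> 1 h + shift \<gamma> 1 h)"
    using S(2) T(2) by (intro subspace_sum[OF root_space_subspace] bracket_homogeneous_root_vectors) auto
  finally show ?thesis .
qed

lemma phi_root_space:
  assumes "x \<in> Lr \<beta>"
  shows "\<phi> x \<in> Lr (shift \<beta> 1)"
  unfolding root_space_iff
proof
  fix h assume h: "h \<in> H0"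
  have "br h (\<phi> x) = \<phi> (br (inv \<phi> h) x)"
    by (simp add: phi_bracket)
  also have "\<dots> = sm (shift \<beta> 1 h) (\<phi> (\<phi> x))"
    using assms inv_phi_H0[OF h] unfolding root_space_iff by (simp add: phi_scale shift_apply h)
  finally show "br h (\<phi> x) = sm (shift \<beta> 1 h) (\<phi> (\<phi> x))" .
qed

lemma inv_phi_root_space:
  assumes "x \<in> Lr \<beta>"
  shows "inv \<phi> x \<in> Lr (rt_comp \<phi> H0 \<beta> 1)"
  unfolding root_space_iff
proof
  fix h assume h: "h \<in> H0"
  have "br h (inv \<phi> x) = inv \<phi> (br (\<phi> h) x)"
    by (simp add: inv_phi_bracket)
  also have "\<dots> = sm (rt_comp \<phi> H0 \<beta> 1 h) (\<phi> (inv \<phi> x))"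
    using assms phi_H0[OF h] unfolding root_space_iff by (simp add: inv_phi_scale rt_comp_1_apply h)
  finally show "br h (inv \<phi> x) = sm (rt_comp \<phi> H0 \<beta> 1 h) (\<phi> (inv \<phi> x))" .
qed

lemma H_root_space_zero: "h \<in> H \<Longrightarrow> h \<in> Lr (\<lambda>_. 0)"
  unfolding root_space_iff using bracket_H H0_H by simp

lemma root_dual_form: "\<gamma> \<in> \<Lambda> \<Longrightarrow> dual_form sm H0 \<gamma>"
  unfolding roots_def by blast

lemma root_nonzero_on_H0:
  assumes "\<gamma> \<in> \<Lambda>"
  obtains h where "h \<in> H0" "\<gamma> h \<noteq> 0"
proof -
  obtain h where "\<gamma> h \<noteq> 0"
    using assms unfolding roots_def by fastforce
  then show thesis
    using that root_dual_form[OF assms] unfolding dual_form_def by blast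
qed

lemma root_vector_nonzero:
  assumes "\<gamma> \<in> \<Lambda>"
  obtains x where "x \<in> Lr \<gamma>" "x \<noteq> 0"
  using assms subspace_0[OF root_space_subspace] unfolding roots_def by blast

lemma rootI:
  "dual_form sm H0 \<gamma> \<Longrightarrow> h \<in> H0 \<Longrightarrow> \<gamma> h \<noteq> 0 \<Longrightarrow> x \<in> Lr \<gamma> \<Longrightarrow> x \<noteq> 0 \<Longrightarrow> \<gamma> \<in> \<Lambda>"
  unfolding roots_def by auto

lemma root_space_of_non_root:
  "dual_form sm H0 \<delta> \<Longrightarrow> \<delta> \<noteq> (\<lambda>_. 0) \<Longrightarrow> \<delta> \<notin> \<Lambda> \<Longrightarrow> x \<in> Lr \<delta> \<Longrightarrow> x = 0"
  unfolding roots_def using subspace_0[OF root_space_subspace] by blast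

lemma root_shift_1:
  assumes "\<gamma> \<in> \<Lambda>"
  shows "shift \<gamma> 1 \<in> \<Lambda>"
proof -
  obtain h where h: "h \<in> H0" "\<gamma> h \<noteq> 0"
    using root_nonzero_on_H0 assms by blast
  obtain x where x: "x \<in> Lr \<gamma>" "x \<noteq> 0"
    using root_vector_nonzero assms by blast
  have "shift \<gamma> 1 (\<phi> h) \<noteq> 0" and "\<phi> x \<noteq> 0"
    using h x by (simp_all add: shift_apply phi_H0)
  then show ?thesis
    by (rule rootI[OF dual_form_shift[OF root_dual_form[OF assms]] phi_H0[OF h(1)] _ phi_root_space[OF x(1)]])
qed

lemma root_shift: "\<gamma> \<in> \<Lambda> \<Longrightarrow> shift \<gamma> n \<in> \<Lambda>"
proof (induction n)
  case 0
  then show ?case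
    by (simp add: shift_0 root_dual_form)
next
  case (Suc n)
  then show ?case
    using root_shift_1[of "shift \<gamma> n"] by simp
qed

lemma root_rt_comp_1:
  assumes "\<gamma> \<in> \<Lambda>"
  shows "rt_comp \<phi> H0 \<gamma> 1 \<in> \<Lambda>"
proof -
  obtain h where h: "h \<in> H0" "\<gamma> h \<noteq> 0"
    using root_nonzero_on_H0 assms by blast
  obtain x where x: "x \<in> Lr \<gamma>" "x \<noteq> 0"
    using root_vector_nonzero assms by blast
  have "rt_comp \<phi> H0 \<gamma> 1 (inv \<phi> h) \<noteq> 0"
    using h by (simp add: rt_comp_1_apply inv_phi_H0)
  moreover have "inv \<phi> x \<noteq> 0"
    using x(2) by (metis phi_inv_phi phi_eq_0_iff)
  ultimately show ?thesis
    by (rule rootI[OF dual_form_rt_comp_1[OF root_dual_form[OF assms]] inv_phi_H0[OF h(1)] _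
          inv_phi_root_space[OF x(1)]])
qed

lemma shift_sum_eq_zero_imp_neg_form:
  assumes "dual_form sm H0 \<beta>" "dual_form sm H0 \<gamma>" and zero: "(\<lambda>h. shift \<beta> 1 h + shift \<gamma> 1 h) = (\<lambda>_. 0)"
  shows "\<gamma> = neg_form \<beta>"
proof
  fix h
  show "\<gamma> h = neg_form \<beta> h"
  proof (cases "h \<in> H0")
    case True
    then have "\<beta> h + \<gamma> h = 0"
      using fun_cong[OF zero, of "\<phi> h"] by (simp add: shift_apply phi_H0)
    then show ?thesis
      unfolding neg_form_def by (simp add: eq_neg_iff_add_eq_0 add.commute)
  next
    case False
    then show ?thesis
      using assms(1,2) unfolding dual_form_def neg_form_def by simp
  qed
qed

primrec conn_seq :: "(nat \<Rightarrow> 'v \<Rightarrow> 'k) \<Rightarrow> nat \<Rightarrow> 'v \<Rightarrow> 'k" where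
  "conn_seq a 0 = a 1"
| "conn_seq a (Suc i) = (\<lambda>h. shift (conn_seq a i) 1 h + shift (a (i + 2)) 1 h)"

lemma conn_sum_eq_shifts:
  "conn_sum \<phi> H0 a i = (\<lambda>h. shift (a 1) i h + (\<Sum>j\<in>{2..i+1}. shift (a j) (i + 2 - j) h))"
proof
  fix h
  have "rt_comp \<phi> H0 (a j) (- (int i + 2 - int j)) h = shift (a j) (i + 2 - j) h" if "j \<in> {2..i+1}" for j
  proof -
    have "- (int i + 2 - int j) = - int (i + 2 - j)"
      using that by auto
    then show ?thesis
      unfolding shift_def by simp
  qed
  then have "(\<Sum>j\<in>{2..i+1}. rt_comp \<phi> H0 (a j) (- (int i + 2 - int j)) h)
      = (\<Sum>j\<in>{2..i+1}. shift (a j) (i + 2 - j) h)"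
    by (rule sum.cong[OF refl])
  then show "conn_sum \<phi> H0 a i h = shift (a 1) i h + (\<Sum>j\<in>{2..i+1}. shift (a j) (i + 2 - j) h)"
    unfolding conn_sum_def shift_def[symmetric] by simp
qed

lemma conn_sum_Suc:
  "conn_sum \<phi> H0 a (Suc i) = (\<lambda>h. shift (conn_sum \<phi> H0 a i) 1 h + shift (a (i + 2)) 1 h)"
proof
  fix h
  show "conn_sum \<phi> H0 a (Suc i) h = shift (conn_sum \<phi> H0 a i) 1 h + shift (a (i + 2)) 1 h"
  proof (cases "h \<in> H0")
    case False
    then show ?thesis
      unfolding conn_sum_eq_shifts by (simp add: shift_apply)
  next
    case h: True
    have "(\<Sum>j\<in>{2..i+1}. shift (a j) (Suc (i + 2 - j)) h) = (\<Sum>j\<in>{2..i+1}. shift (a j) (Suc i + 2 - j) h)"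
      by (intro sum.cong) (auto simp: Suc_diff_le)
    then have "shift (conn_sum \<phi> H0 a i) 1 h
        = shift (a 1) (Suc i) h + (\<Sum>j\<in>{2..i+1}. shift (a j) (Suc i + 2 - j) h)"
      unfolding conn_sum_eq_shifts shift_1_apply[OF h] using h by (simp add: shift_Suc_apply)
    moreover have "conn_sum \<phi> H0 a (Suc i) h
        = shift (a 1) (Suc i) h + ((\<Sum>j\<in>{2..i+1}. shift (a j) (Suc i + 2 - j) h) + shift (a (i + 2)) 1 h)"
      unfolding conn_sum_eq_shifts by (simp add: sum.cl_ivl_Suc del: sum.op_ivl_Suc)
    ultimately show ?thesis
      by (simp add: add.assoc)
  qed
qed

lemma conn_sum_eq_conn_seq:
  assumes "dual_form sm H0 (a 1)"
  shows "conn_sum \<phi> H0 a i = conn_seq a i"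
proof (induction i)
  case 0
  show ?case
    unfolding conn_sum_eq_shifts using shift_0[OF assms] by simp
next
  case (Suc i)
  then show ?case
    unfolding conn_sum_Suc by simp
qed

lemma conn_seq_cong: "(\<And>j. 1 \<le> j \<Longrightarrow> j \<le> i + 1 \<Longrightarrow> a j = b j) \<Longrightarrow> conn_seq a i = conn_seq b i"
  by (induction i) auto

lemma conn_seq_shift: "conn_seq (\<lambda>j. shift (a j) n) i = shift (conn_seq a i) n"
  by (induction i) (simp_all add: shift_add add.commute)

lemma conn_seq_scale: "conn_seq (\<lambda>j h. e * a j h) i = (\<lambda>h. e * conn_seq a i h)"
  by (induction i) (simp_all add: shift_add shift_scale distrib_left)

lemma conn_seq_append:
  assumes "1 \<le> k" and "conn_seq a (k - 1) = b 1"
  defines "c \<equiv> \<lambda>j. if j \<le> k then a j else b (j - k + 1)"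
  shows "i \<le> k - 1 \<Longrightarrow> conn_seq c i = conn_seq a i"
    and "conn_seq c (k - 1 + i) = conn_seq b i"
proof -
  show prefix: "conn_seq c i = conn_seq a i" if "i \<le> k - 1" for i
    using that assms(1) by (intro conn_seq_cong) (auto simp: c_def)
  show "conn_seq c (k - 1 + i) = conn_seq b i"
  proof (induction i)
    case 0
    then show ?case
      using prefix[of "k - 1"] assms(2) by simp
  next
    case (Suc i)
    have "c (k - 1 + i + 2) = b (i + 2)"
      using assms(1) unfolding c_def by auto
    then show ?case
      using Suc by simp
  qed
qed

lemma conn_seq_reverse:
  assumes "j \<le> k - 1" and "dual_form sm H0 (conn_seq a (k - 1))"
  defines "c \<equiv> \<lambda>j. if j = 1 then conn_seq a (k - 1) else neg_form (shift (a (k + 2 - j)) (2 * j - 3))"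
  shows "conn_seq c j = shift (conn_seq a (k - 1 - j)) (2 * j)"
  using assms(1)
proof (induction j)
  case 0
  then show ?case
    using assms(2) by (simp add: c_def shift_0)
next
  case (Suc j)
  have k: "k - 1 - j = Suc (k - 2 - j)" "k - 2 - j + 2 = k - j" "k - 1 - Suc j = k - 2 - j"
    and c: "c (j + 2) = neg_form (shift (a (k - j)) (2 * j + 1))"
    using Suc.prems unfolding c_def by (auto simp: numeral_2_eq_2 algebra_simps)
  have "conn_seq c (Suc j) = (\<lambda>h. shift (conn_seq a (k - 1 - j)) (2 * j + 1) h - shift (a (k - j)) (2 * j + 2) h)"
    using Suc unfolding conn_seq.simps c shift_neg_form shift_shift by (simp add: neg_form_def)
  also have "\<dots> = shift (conn_seq a (k - 1 - Suc j)) (2 * Suc j)"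
    unfolding k(1) conn_seq.simps k(2) shift_add k(3) by (simp add: numeral_2_eq_2)
  finally show ?case .
qed

end

locale split_hom_lie_color = hom_lie_color_abelian_subalgebra sm Lg br \<phi> \<epsilon> H
  for sm :: "'k::field \<Rightarrow> 'v::ab_group_add \<Rightarrow> 'v" and Lg :: "'g::ab_group_add \<Rightarrow> 'v set"
    and br \<phi> \<epsilon> H +
  assumes split: "is_split sm Lg br \<phi> H"
    and symmetric: "symmetric_roots sm Lg br \<phi> H"
begin

lemma split_decomposition:
  "\<exists>h\<in>H. \<exists>S f. finite S \<and> S \<subseteq> \<Lambda> \<and> (\<forall>\<gamma>\<in>S. f \<gamma> \<in> Lr \<gamma>) \<and> v = h + sum f S"
  using split unfolding is_split_def Let_def by blast

lemma split_direct:
  "h \<in> H \<Longrightarrow> finite S \<Longrightarrow> S \<subseteq> \<Lambda> \<Longrightarrow> \<forall>\<gamma>\<in>S. f \<gamma> \<in> Lr \<gamma> \<Longrightarrow> h + sum f S = 0 \<Longrightarrow> \<gamma> \<in> S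
    \<Longrightarrow> f \<gamma> = 0"
  using split unfolding is_split_def Let_def by blast

lemma root_space_zero_subset_H:
  assumes x: "x \<in> Lr (\<lambda>_. 0)"
  shows "x \<in> H"
proof -
  obtain h0 S f where S: "h0 \<in> H" "finite S" "S \<subseteq> \<Lambda>" "\<forall>\<gamma>\<in>S. f \<gamma> \<in> Lr \<gamma>" "x = h0 + sum f S"
    using split_decomposition by blast
  have "f \<gamma> = 0" if \<gamma>: "\<gamma> \<in> S" for \<gamma>
  proof -
    obtain h where h: "h \<in> H0" "\<gamma> h \<noteq> 0"
      using root_nonzero_on_H0 \<gamma> S(3) by blast
    have "0 = br h x"
      using x h unfolding root_space_iff by simp
    also have "\<dots> = \<phi> (\<Sum>\<delta>\<in>S. sm (\<delta> h) (f \<delta>))"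
      using bracket_H[OF H0_H[OF h(1)] S(1)] S(4) h(1)
      unfolding S(5) bracket_add_right bracket_sum_right root_space_iff by (simp add: phi_sum phi_scale)
    finally have "0 + (\<Sum>\<delta>\<in>S. sm (\<delta> h) (f \<delta>)) = 0"
      by simp
    moreover have "\<forall>\<delta>\<in>S. sm (\<delta> h) (f \<delta>) \<in> Lr \<delta>"
      using S(4) subspace_scale[OF root_space_subspace] by blast
    ultimately have "sm (\<gamma> h) (f \<gamma>) = 0"
      using split_direct[OF subspace_0[OF H_subspace] S(2,3), where f = "\<lambda>\<delta>. sm (\<delta> h) (f \<delta>)"] \<gamma> by blast
    then show ?thesis
      using h(2) by simp
  qed
  then show ?thesis
    using S(1,5) by simp
qed

lemma root_sign_scale: "\<gamma> \<in> \<Lambda> \<Longrightarrow> e = 1 \<or> e = -1 \<Longrightarrow> (\<lambda>h. e * \<gamma> h) \<in> \<Lambda>"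
  using symmetric unfolding symmetric_roots_def neg_form_def by auto

lemma root_neg_form_shift: "\<gamma> \<in> \<Lambda> \<Longrightarrow> neg_form (shift \<gamma> n) \<in> \<Lambda>"
  using symmetric root_shift unfolding symmetric_roots_def by blast

definition root_chain :: "nat \<Rightarrow> (nat \<Rightarrow> 'v \<Rightarrow> 'k) \<Rightarrow> bool" where
  "root_chain k a \<longleftrightarrow> 1 \<le> k \<and> (\<forall>j\<in>{1..k}. a j \<in> \<Lambda>) \<and> (\<forall>i<k. conn_seq a i \<in> \<Lambda>)"

definition chain_connected :: "('v \<Rightarrow> 'k) \<Rightarrow> ('v \<Rightarrow> 'k) \<Rightarrow> bool" where
  "chain_connected \<alpha> \<beta> \<longleftrightarrow> (\<exists>k a n m e. root_chain k a \<and> a 1 = shift \<alpha> n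
     \<and> (e = 1 \<or> e = -1) \<and> conn_seq a (k - 1) = (\<lambda>h. e * shift \<beta> m h))"

lemma chain_connectedI:
  "root_chain k a \<Longrightarrow> a 1 = shift \<alpha> n \<Longrightarrow> e = 1 \<or> e = -1 \<Longrightarrow> conn_seq a (k - 1) = (\<lambda>h. e * shift \<beta> m h)
    \<Longrightarrow> chain_connected \<alpha> \<beta>"
  unfolding chain_connected_def by blast

lemma chain_connectedE:
  assumes "chain_connected \<alpha> \<beta>"
  obtains k a n m e where "root_chain k a" "a 1 = shift \<alpha> n" "e = 1 \<or> e = -1"
    "conn_seq a (k - 1) = (\<lambda>h. e * shift \<beta> m h)"
  using assms unfolding chain_connected_def by blast

lemma connected_iff_chain_connected:
  assumes \<beta>: "\<beta> \<in> \<Lambda>"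
  shows "connected sm Lg br \<phi> H \<alpha> \<beta> \<longleftrightarrow> chain_connected \<alpha> \<beta>"
proof
  assume "connected sm Lg br \<phi> H \<alpha> \<beta>"
  then obtain k a n m where k: "1 \<le> k" and a: "\<forall>j\<in>{1..k}. a j \<in> \<Lambda>"
    and n: "a 1 = rt_comp \<phi> H0 \<alpha> (- int n)" and mid: "\<forall>i\<in>{1..k-2}. conn_sum \<phi> H0 a i \<in> \<Lambda>"
    and last: "(if k = 1 then a 1 else conn_sum \<phi> H0 a (k - 1))
      \<in> {rt_comp \<phi> H0 \<beta> (- int m), neg_form (rt_comp \<phi> H0 \<beta> (- int m))}"
    unfolding connected_def Let_def by blast
  have seq: "conn_sum \<phi> H0 a i = conn_seq a i" for i
    using a k by (intro conn_sum_eq_conn_seq root_dual_form) auto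
  have "conn_seq a (k - 1) \<in> {shift \<beta> m, neg_form (shift \<beta> m)}"
    using last k by (cases "k = 1") (auto simp: seq shift_def)
  then obtain e where e: "e = 1 \<or> e = -1" "conn_seq a (k - 1) = (\<lambda>h. e * shift \<beta> m h)"
    unfolding neg_form_def by (metis (no_types, lifting) empty_iff insert_iff mult_1 mult_minus1)
  have "conn_seq a i \<in> \<Lambda>" if "i < k" for i
    using that a k mid e root_sign_scale[OF root_shift[OF \<beta>]]
    by (cases "i = 0"; cases "i = k - 1") (auto simp: seq)
  with k a n e show "chain_connected \<alpha> \<beta>"
    by (intro chain_connectedI[of k a \<alpha> n e \<beta> m]) (auto simp: root_chain_def shift_def)
next
  assume "chain_connected \<alpha> \<beta>"
  then obtain k a n m e where chain: "root_chain k a" and n: "a 1 = shift \<alpha> n"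
    and e: "e = 1 \<or> e = -1" "conn_seq a (k - 1) = (\<lambda>h. e * shift \<beta> m h)"
    by (rule chain_connectedE)
  have seq: "conn_sum \<phi> H0 a i = conn_seq a i" for i
    using chain by (intro conn_sum_eq_conn_seq root_dual_form) (auto simp: root_chain_def)
  have "(if k = 1 then a 1 else conn_sum \<phi> H0 a (k - 1))
      \<in> {rt_comp \<phi> H0 \<beta> (- int m), neg_form (rt_comp \<phi> H0 \<beta> (- int m))}"
    using e by (auto simp: seq shift_def neg_form_def)
  moreover have "\<forall>i\<in>{1..k-2}. conn_sum \<phi> H0 a i \<in> \<Lambda>"
    using chain by (auto simp: seq root_chain_def)
  ultimately show "connected sm Lg br \<phi> H \<alpha> \<beta>"
    using chain n unfolding connected_def Let_def root_chain_def shift_def by blast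
qed

lemma root_chain_shift: "root_chain k a \<Longrightarrow> root_chain k (\<lambda>j. shift (a j) n)"
  unfolding root_chain_def by (simp add: conn_seq_shift root_shift)

lemma root_chain_sign_scale: "root_chain k a \<Longrightarrow> e = 1 \<or> e = -1 \<Longrightarrow> root_chain k (\<lambda>j h. e * a j h)"
  unfolding root_chain_def by (simp add: conn_seq_scale root_sign_scale)

lemma root_chain_append:
  assumes a: "root_chain k a" and b: "root_chain p b" and join: "conn_seq a (k - 1) = b 1"
  defines "c \<equiv> \<lambda>j. if j \<le> k then a j else b (j - k + 1)"
  shows "root_chain (k + p - 1) c" and "conn_seq c (k + p - 1 - 1) = conn_seq b (p - 1)"
proof -
  have k: "1 \<le> k" and p: "1 \<le> p"
    using a b unfolding root_chain_def by blast+
  note prefix = conn_seq_append(1)[of k a b, OF k join, folded c_def]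
    and suffix = conn_seq_append(2)[of k a b, OF k join, folded c_def]
  have "conn_seq c i \<in> \<Lambda>" if "i < k + p - 1" for i
  proof (cases "i \<le> k - 1")
    case True
    then show ?thesis
      using a k prefix by (simp add: root_chain_def)
  next
    case False
    then have "i = k - 1 + (i - (k - 1))" and "i - (k - 1) < p"
      using that by auto
    then show ?thesis
      using b suffix by (metis root_chain_def)
  qed
  moreover have "c j \<in> \<Lambda>" if "j \<in> {1..k + p - 1}" for j
    using a b that unfolding root_chain_def c_def by auto
  ultimately show "root_chain (k + p - 1) c"
    using k p unfolding root_chain_def by auto
  have "k + p - 1 - 1 = k - 1 + (p - 1)"
    using k p by simp
  then show "conn_seq c (k + p - 1 - 1) = conn_seq b (p - 1)"
    using suffix by simp
qed

lemma root_chain_reverse: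
  assumes a: "root_chain k a"
  defines "c \<equiv> \<lambda>j. if j = 1 then conn_seq a (k - 1) else neg_form (shift (a (k + 2 - j)) (2 * j - 3))"
  shows "root_chain k c" and "conn_seq c (k - 1) = shift (a 1) (2 * (k - 1))"
proof -
  have k: "1 \<le> k" and last: "conn_seq a (k - 1) \<in> \<Lambda>"
    using a unfolding root_chain_def by auto
  note reverse = conn_seq_reverse[OF _ root_dual_form[OF last], folded c_def]
  have "c j \<in> \<Lambda>" if j: "j \<in> {1..k}" for j
  proof (cases "j = 1")
    case False
    then have "k + 2 - j \<in> {1..k}"
      using j by auto
    then have "a (k + 2 - j) \<in> \<Lambda>"
      using a unfolding root_chain_def by blast
    then show ?thesis
      using False unfolding c_def by (simp add: root_neg_form_shift)
  qed (use last in \<open>simp add: c_def\<close>)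
  moreover have "conn_seq c i \<in> \<Lambda>" if "i < k" for i
    using a that reverse[of i] unfolding root_chain_def by (simp add: root_shift)
  ultimately show "root_chain k c"
    using k unfolding root_chain_def by blast
  show "conn_seq c (k - 1) = shift (a 1) (2 * (k - 1))"
    using reverse[of "k - 1"] by simp
qed

lemma chain_connected_trans:
  assumes "chain_connected \<alpha> \<beta>" and "chain_connected \<beta> \<gamma>"
  shows "chain_connected \<alpha> \<gamma>"
proof -
  obtain k a n m e where a: "root_chain k a" "a 1 = shift \<alpha> n" "e = 1 \<or> e = -1"
    "conn_seq a (k - 1) = (\<lambda>h. e * shift \<beta> m h)"
    using assms(1) by (rule chain_connectedE)
  obtain p b n' m' e' where b: "root_chain p b" "b 1 = shift \<beta> n'" "e' = 1 \<or> e' = -1"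
    "conn_seq b (p - 1) = (\<lambda>h. e' * shift \<gamma> m' h)"
    using assms(2) by (rule chain_connectedE)
  define a' where "a' = (\<lambda>j. shift (a j) n')"
  define b' where "b' = (\<lambda>j h. e * shift (b j) m h)"
  have a': "root_chain k a'" and b': "root_chain p b'"
    unfolding a'_def b'_def using a b by (simp_all add: root_chain_shift root_chain_sign_scale)
  have join: "conn_seq a' (k - 1) = b' 1"
    using a(4) b(2) by (simp add: a'_def b'_def conn_seq_shift shift_scale add.commute)
  note chain = root_chain_append[OF a' b' join]
  have k: "1 \<le> k"
    using a(1) unfolding root_chain_def by blast
  show ?thesis
  proof (rule chain_connectedI[OF chain(1)])
    show "(if 1 \<le> k then a' 1 else b' (1 - k + 1)) = shift \<alpha> (n + n')"
      using k a(2) by (simp add: a'_def)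
    show "conn_seq (\<lambda>j. if j \<le> k then a' j else b' (j - k + 1)) (k + p - 1 - 1)
        = (\<lambda>h. (e * e') * shift \<gamma> (m' + m) h)"
      unfolding chain(2) unfolding b'_def conn_seq_scale conn_seq_shift b(4) by (simp add: shift_scale mult.assoc)
    show "e * e' = 1 \<or> e * e' = -1"
      using a(3) b(3) by auto
  qed
qed

lemma chain_connected_sym:
  assumes "chain_connected \<alpha> \<beta>"
  shows "chain_connected \<beta> \<alpha>"
proof -
  obtain k a n m e where a: "root_chain k a" "a 1 = shift \<alpha> n" "e = 1 \<or> e = -1"
    "conn_seq a (k - 1) = (\<lambda>h. e * shift \<beta> m h)"
    using assms by (rule chain_connectedE)
  define c where "c = (\<lambda>j. if j = 1 then conn_seq a (k - 1) else neg_form (shift (a (k + 2 - j)) (2 * j - 3)))"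
  note c = root_chain_reverse[OF a(1), folded c_def]
  show ?thesis
  proof (rule chain_connectedI[OF root_chain_sign_scale[OF c(1) a(3)]])
    show "(\<lambda>h. e * c 1 h) = shift \<beta> m"
      using a(3,4) by (auto simp: c_def)
    show "conn_seq (\<lambda>j h. e * c j h) (k - 1) = (\<lambda>h. e * shift \<alpha> (n + 2 * (k - 1)) h)"
      unfolding conn_seq_scale c(2) a(2) by simp
  qed (rule a(3))
qed

lemma chain_connected_shift_1: "\<beta> \<in> \<Lambda> \<Longrightarrow> chain_connected (shift \<beta> 1) \<beta>"
  by (rule chain_connectedI[of 1 "\<lambda>_. shift \<beta> 1" _ 0 1 _ 1]) (simp_all add: root_chain_def root_shift)

lemma chain_connected_rt_comp_1: "\<beta> \<in> \<Lambda> \<Longrightarrow> chain_connected \<beta> (rt_comp \<phi> H0 \<beta> 1)"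
  by (rule chain_connectedI[of 1 "\<lambda>_. \<beta>" _ 0 1 _ 1])
    (simp_all add: root_chain_def shift_0 root_dual_form shift_rt_comp_1 del: One_nat_def)

lemma chain_connected_sum:
  assumes "\<beta> \<in> \<Lambda>" "\<gamma> \<in> \<Lambda>" and \<delta>: "\<delta> \<in> \<Lambda>" "\<delta> = (\<lambda>h. shift \<beta> 1 h + shift \<gamma> 1 h)"
  shows "chain_connected \<beta> \<delta>"
proof (rule chain_connectedI[of 2 "\<lambda>j. if j = 1 then \<beta> else \<gamma>" _ 0 1 _ 0])
  show "root_chain 2 (\<lambda>j. if j = 1 then \<beta> else \<gamma>)"
    using assms by (auto simp: root_chain_def less_2_cases_iff)
qed (use assms in \<open>simp_all add: shift_0 root_dual_form numeral_2_eq_2\<close>)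

abbreviation "class \<alpha> \<equiv> conn_class sm Lg br \<phi> H \<alpha>"

lemma conn_class_iff: "\<alpha> \<in> \<Lambda> \<Longrightarrow> \<beta> \<in> class \<alpha> \<longleftrightarrow> \<beta> \<in> \<Lambda> \<and> chain_connected \<beta> \<alpha>"
  unfolding conn_class_def using connected_iff_chain_connected by blast

lemma conn_class_shift_1:
  assumes "\<alpha> \<in> \<Lambda>" "\<beta> \<in> class \<alpha>"
  shows "shift \<beta> 1 \<in> class \<alpha>"
proof -
  have "\<beta> \<in> \<Lambda>" "chain_connected \<beta> \<alpha>"
    using assms conn_class_iff by blast+
  then have "shift \<beta> 1 \<in> \<Lambda>" "chain_connected (shift \<beta> 1) \<alpha>"
    using root_shift chain_connected_trans[OF chain_connected_shift_1] by blast+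
  then show ?thesis
    using conn_class_iff[OF assms(1)] by blast
qed

lemma conn_class_rt_comp_1:
  assumes "\<alpha> \<in> \<Lambda>" "\<beta> \<in> class \<alpha>"
  shows "rt_comp \<phi> H0 \<beta> 1 \<in> class \<alpha>"
proof -
  have "\<beta> \<in> \<Lambda>" "chain_connected \<beta> \<alpha>"
    using assms conn_class_iff by blast+
  then have "rt_comp \<phi> H0 \<beta> 1 \<in> \<Lambda>" "chain_connected (rt_comp \<phi> H0 \<beta> 1) \<alpha>"
    using root_rt_comp_1 chain_connected_trans[OF chain_connected_sym[OF chain_connected_rt_comp_1]] by blast+
  then show ?thesis
    using conn_class_iff[OF assms(1)] by blast
qed

lemma conn_class_sum:
  assumes "\<alpha> \<in> \<Lambda>" "\<beta> \<in> class \<alpha>" "\<gamma> \<in> class \<alpha>" and "(\<lambda>h. shift \<beta> 1 h + shift \<gamma> 1 h) \<in> \<Lambda>"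
  shows "(\<lambda>h. shift \<beta> 1 h + shift \<gamma> 1 h) \<in> class \<alpha>"
proof -
  have "\<beta> \<in> \<Lambda>" "\<gamma> \<in> \<Lambda>" "chain_connected \<beta> \<alpha>"
    using assms conn_class_iff by blast+
  then have "chain_connected (\<lambda>h. shift \<beta> 1 h + shift \<gamma> 1 h) \<alpha>"
    using chain_connected_trans[OF chain_connected_sym[OF chain_connected_sum]] assms(4) by blast
  then show ?thesis
    using conn_class_iff[OF assms(1)] assms(4) by blast
qed

context
  fixes \<alpha>
  assumes \<alpha>: "\<alpha> \<in> \<Lambda>"
begin

abbreviation "HC \<equiv> H_class sm Lg br \<phi> H \<alpha>"
abbreviation "VC \<equiv> V_class sm Lg br \<phi> H \<alpha>"
abbreviation "LC \<equiv> L_class sm Lg br \<phi> H \<alpha>"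

lemma L_class_subspace: "subspace LC"
  unfolding L_class_def H_class_def V_class_def by (rule subspace_sums) simp_all

lemma H_class_subset_L_class: "x \<in> HC \<Longrightarrow> x \<in> LC"
  unfolding L_class_def V_class_def using span_zero by force

lemma V_class_subset_L_class: "x \<in> VC \<Longrightarrow> x \<in> LC"
  unfolding L_class_def H_class_def using span_zero by force

lemma H_class_subset_H: "HC \<subseteq> H"
  unfolding H_class_def
proof (rule span_minimal[OF _ H_subspace], safe)
  fix \<beta> x y assume "x \<in> Lr \<beta>" "y \<in> Lr (neg_form \<beta>)"
  then have "br x y \<in> Lr (\<lambda>h. shift \<beta> 1 h + shift (neg_form \<beta>) 1 h)"
    by (rule bracket_root_spaces)
  moreover have "(\<lambda>h. shift \<beta> 1 h + shift (neg_form \<beta>) 1 h) = (\<lambda>_. 0)"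
    unfolding shift_neg_form by (simp add: neg_form_def)
  ultimately show "br x y \<in> H"
    using root_space_zero_subset_H by simp
qed

lemma bracket_H_V_class:
  assumes h: "h \<in> H" and v: "v \<in> VC"
  shows "br h v \<in> VC \<and> br v h \<in> VC"
  using v unfolding V_class_def
proof (induction rule: span_induct)
  case base
  have "subspace ({v. br h v \<in> VC} \<inter> {v. br v h \<in> VC})"
    by (intro subspace_inter linear_subspace_vimage[OF linear_bracket_right, unfolded vimage_def]
        linear_subspace_vimage[OF linear_bracket_left, unfolded vimage_def]) (simp_all add: V_class_def)
  then show ?case
    by (simp add: Collect_conj_eq V_class_def)
next
  case (step x)
  then obtain \<beta> where \<beta>: "\<beta> \<in> class \<alpha>" "x \<in> Lr \<beta>"
    by blast
  have "br h x \<in> Lr (shift \<beta> 1)" and "br x h \<in> Lr (shift \<beta> 1)"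
    using bracket_root_spaces[OF H_root_space_zero[OF h] \<beta>(2)] bracket_root_spaces[OF \<beta>(2) H_root_space_zero[OF h]]
    by (simp_all add: shift_zero)
  then show ?case
    using conn_class_shift_1[OF \<alpha> \<beta>(1)] span_base unfolding V_class_def by blast
qed

lemma bracket_class_root_vectors:
  assumes \<beta>: "\<beta> \<in> class \<alpha>" "x \<in> Lr \<beta>" and \<gamma>: "\<gamma> \<in> class \<alpha>" "y \<in> Lr \<gamma>"
  shows "br x y \<in> LC"
proof -
  define \<delta> where "\<delta> = (\<lambda>h. shift \<beta> 1 h + shift \<gamma> 1 h)"
  have xy: "br x y \<in> Lr \<delta>"
    unfolding \<delta>_def by (rule bracket_root_spaces[OF \<beta>(2) \<gamma>(2)])
  have dual: "dual_form sm H0 \<beta>" "dual_form sm H0 \<gamma>"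
    using \<beta>(1) \<gamma>(1) conn_class_iff[OF \<alpha>] root_dual_form by blast+
  consider "\<delta> = (\<lambda>_. 0)" | "\<delta> \<in> \<Lambda>" | "\<delta> \<noteq> (\<lambda>_. 0)" "\<delta> \<notin> \<Lambda>"
    by blast
  then show ?thesis
  proof cases
    case 1
    then have "\<gamma> = neg_form \<beta>"
      using shift_sum_eq_zero_imp_neg_form[OF dual] unfolding \<delta>_def by blast
    then have "br x y \<in> HC"
      using \<beta> \<gamma>(2) unfolding H_class_def by (blast intro: span_base)
    then show ?thesis
      by (rule H_class_subset_L_class)
  next
    case 2
    then have "br x y \<in> VC"
      using xy conn_class_sum[OF \<alpha> \<beta>(1) \<gamma>(1)] unfolding \<delta>_def V_class_def by (blast intro: span_base)
    then show ?thesis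
      by (rule V_class_subset_L_class)
  next
    case 3
    moreover have "dual_form sm H0 \<delta>"
      unfolding \<delta>_def using dual by (intro dual_form_add dual_form_shift)
    ultimately have "br x y = 0"
      using root_space_of_non_root xy by blast
    then show ?thesis
      using subspace_0[OF L_class_subspace] by simp
  qed
qed

lemma bracket_V_class:
  assumes v: "v \<in> VC" and w: "w \<in> VC"
  shows "br v w \<in> LC"
proof -
  have "\<forall>w\<in>VC. br v w \<in> LC"
    using v[unfolded V_class_def]
  proof (induction rule: span_induct)
    case base
    have "subspace (\<Inter>w\<in>VC. {u. br u w \<in> LC})"
      using linear_subspace_vimage[OF linear_bracket_left L_class_subspace]
      by (intro subspace_Int) (simp add: vimage_def)
    moreover have "(\<Inter>w\<in>VC. {u. br u w \<in> LC}) = {u. \<forall>w\<in>VC. br u w \<in> LC}"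
      by blast
    ultimately show ?case
      by simp
  next
    case (step x)
    then obtain \<beta> where \<beta>: "\<beta> \<in> class \<alpha>" "x \<in> Lr \<beta>"
      by blast
    show ?case
    proof
      fix w assume "w \<in> VC"
      then show "br x w \<in> LC"
        unfolding V_class_def
      proof (induction rule: span_induct)
        case base
        show ?case
          using linear_subspace_vimage[OF linear_bracket_right L_class_subspace] by (simp add: vimage_def)
      next
        case (step y)
        then show ?case
          using bracket_class_root_vectors[OF \<beta>] by blast
      qed
    qed
  qed
  then show ?thesis
    using w by blast
qed

lemma L_class_bracket_closed:
  assumes x: "x \<in> LC" and y: "y \<in> LC"
  shows "br x y \<in> LC"
proof -
  obtain h1 v1 where 1: "x = h1 + v1" "h1 \<in> HC" "v1 \<in> VC"
    using x unfolding L_class_def by blast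
  obtain h2 v2 where 2: "y = h2 + v2" "h2 \<in> HC" "v2 \<in> VC"
    using y unfolding L_class_def by blast
  have "br x y = br h1 h2 + br h1 v2 + (br v1 h2 + br v1 v2)"
    unfolding 1(1) 2(1) bracket_add_left bracket_add_right by (simp add: algebra_simps)
  moreover have "br h1 h2 = 0"
    using bracket_H H_class_subset_H 1(2) 2(2) by blast
  moreover have "br h1 v2 \<in> LC" "br v1 h2 \<in> LC"
    using bracket_H_V_class H_class_subset_H 1 2 V_class_subset_L_class by blast+
  moreover have "br v1 v2 \<in> LC"
    using bracket_V_class[OF 1(3) 2(3)] .
  ultimately show ?thesis
    using subspace_add[OF L_class_subspace] by simp
qed

lemma L_class_preserved:
  assumes f: "Vector_Spaces.linear sm sm f" "\<And>x y. f (br x y) = br (f x) (f y)"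
    and T: "\<And>x \<beta>. x \<in> Lr \<beta> \<Longrightarrow> f x \<in> Lr (T \<beta>)" "\<And>\<beta>. T (neg_form \<beta>) = neg_form (T \<beta>)"
      "\<And>\<beta>. \<beta> \<in> class \<alpha> \<Longrightarrow> T \<beta> \<in> class \<alpha>"
    and z: "z \<in> LC"
  shows "f z \<in> LC"
proof -
  obtain h v where hv: "z = h + v" "h \<in> HC" "v \<in> VC"
    using z unfolding L_class_def by blast
  have "f h \<in> HC"
    using hv(2)[unfolded H_class_def]
  proof (induction rule: span_induct)
    case base
    show ?case
      using linear_subspace_vimage[OF f(1)] by (simp add: vimage_def H_class_def)
  next
    case (step u)
    then obtain \<beta> x y where u: "\<beta> \<in> class \<alpha>" "u = br x y" "x \<in> Lr \<beta>" "y \<in> Lr (neg_form \<beta>)"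
      by blast
    then have "f x \<in> Lr (T \<beta>)" "f y \<in> Lr (neg_form (T \<beta>))"
      using T(1,2) by metis+
    then show ?case
      using u(1,2) f(2) T(3) unfolding H_class_def by (blast intro: span_base)
  qed
  moreover have "f v \<in> VC"
    using hv(3)[unfolded V_class_def]
  proof (induction rule: span_induct)
    case base
    show ?case
      using linear_subspace_vimage[OF f(1)] by (simp add: vimage_def V_class_def)
  next
    case (step u)
    then show ?case
      using T(1,3) unfolding V_class_def by (blast intro: span_base)
  qed
  ultimately show ?thesis
    unfolding hv(1) L_class_def linear_add[OF f(1)] by blast
qed

lemma phi_image_L_class: "\<phi> ` LC = LC"
proof
  show "\<phi> ` LC \<subseteq> LC"
    using L_class_preserved[where T = "\<lambda>\<beta>. shift \<beta> 1", OF linear_phi phi_bracket phi_root_space shift_neg_form conn_class_shift_1[OF \<alpha>]]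
    by blast
  have "inv \<phi> z \<in> LC" if "z \<in> LC" for z
    using L_class_preserved[where T = "\<lambda>\<beta>. rt_comp \<phi> H0 \<beta> 1", OF linear_inv_phi inv_phi_bracket inv_phi_root_space rt_comp_1_neg_form
        conn_class_rt_comp_1[OF \<alpha>] that] .
  then show "LC \<subseteq> \<phi> ` LC"
    by (metis image_eqI phi_inv_phi subsetI)
qed

end

end

theorem mainTheorem7:
  fixes sm :: "'k::field \<Rightarrow> 'v::ab_group_add \<Rightarrow> 'v"
    and Lg :: "'g::ab_group_add \<Rightarrow> 'v set"
    and br :: "'v \<Rightarrow> 'v \<Rightarrow> 'v"
    and \<phi> :: "'v \<Rightarrow> 'v"
    and \<epsilon> :: "'g \<Rightarrow> 'g \<Rightarrow> 'k"
    and H :: "'v set"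
    and \<alpha> :: "'v \<Rightarrow> 'k"
  assumes "hom_lie_color sm Lg br \<phi> \<epsilon>"
    and "bij \<phi>"
    and "max_abelian_graded_subalgebra sm Lg br \<phi> H"
    and "is_split sm Lg br \<phi> H"
    and "symmetric_roots sm Lg br \<phi> H"
    and "\<alpha> \<in> roots sm Lg br \<phi> H"
  shows "(\<forall>x\<in>L_class sm Lg br \<phi> H \<alpha>. \<forall>y\<in>L_class sm Lg br \<phi> H \<alpha>. br x y \<in> L_class sm Lg br \<phi> H \<alpha>)
         \<and> \<phi> ` L_class sm Lg br \<phi> H \<alpha> = L_class sm Lg br \<phi> H \<alpha>"
proof -
  have "subalgebra sm Lg br \<phi> H" and "abelian br H"
    using assms(3) unfolding max_abelian_graded_subalgebra_def by blast+
  then interpret split_hom_lie_color sm Lg br \<phi> \<epsilon> H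
    using assms(1,2,4,5) by unfold_locales
  show ?thesis
    using L_class_bracket_closed[OF assms(6)] phi_image_L_class[OF assms(6)] by blast
qed

end
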